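(* For every probabilistic single-item auction (with $n$ bidders and $m$ types), there exists a mixed signaling scheme maximizing the expected revenue among all mixed signaling schemes that uses at most $m+\min\{\binom{n}{2},\binom{m}{2}\}$ signals.
   Context: A probabilistic single-item auction consists of $n\ge 2$ bidders, $m$ item types, a probability distribution $(p_1,\dots,p_m)$ over types, and nonnegative valuations $v_{i,j}$ (value of bidder $i$ for an item of type $j$). The auctioneer observes the realized type and broadcasts a signal; bidders then participate in a second-price auction, each bidding their expected valuation conditional on the signal. A mixed signaling scheme is a finite set $\mathcal{S}$ of signals and a map $\varphi:[m]\times\mathcal{S}\to[0,1]$ with $\sum_{S\in\mathcal{S}}\varphi(j,S)=1$ for every type $j$. Writing $\psi_{i,j}=p_jv_{i,j}$ and $\mathrm{max2}$ for the second-largest entry of a list (with multiplicity), the expected revenue of $\varphi$ is $\sum_{S\in\mathcal{S}}\mathrm{max2}_i\big\{\sum_j \psi_{i,j}\varphi(j,S)\big\}$. *)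

theory Defs
  imports Complex_Main
begin

text \<open>Bidders are indexed by 0..<n, item types by 0..<m, signals by natural numbers
  (any finite signal set is in bijection with a finite set of naturals).\<close>

definition max2 :: "real list \<Rightarrow> real" where
  "max2 xs = rev (sort xs) ! 1"

text \<open>A mixed signaling scheme: a finite signal set S and phi j s = probability of
  sending signal s when the realized type is j.\<close>
definition is_mixed_scheme :: "nat \<Rightarrow> nat set \<Rightarrow> (nat \<Rightarrow> nat \<Rightarrow> real) \<Rightarrow> bool" where
  "is_mixed_scheme m S \<phi> \<longleftrightarrow> finite S \<and>
     (\<forall>j<m. \<forall>s\<in>S. 0 \<le> \<phi> j s \<and> \<phi> j s \<le> 1) \<and>
     (\<forall>j<m. (\<Sum>s\<in>S. \<phi> j s) = 1)"

definition revenue :: "nat \<Rightarrow> nat \<Rightarrow> (nat \<Rightarrow> real) \<Rightarrow> (nat \<Rightarrow> nat \<Rightarrow> real)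
    \<Rightarrow> nat set \<Rightarrow> (nat \<Rightarrow> nat \<Rightarrow> real) \<Rightarrow> real" where
  "revenue n m p v S \<phi> =
     (\<Sum>s\<in>S. max2 (map (\<lambda>i. \<Sum>j<m. (p j * v i j) * \<phi> j s) [0..<n]))"

end

theory Submission
  imports Defs "HOL-Analysis.Analysis"
begin

text \<open>Absorb the prior into the valuations, \<open>w i j = p j * v i j\<close>. The revenue of a scheme is
  then \<open>\<Sum>s. F (\<phi>(\<cdot>, s))\<close>, where \<open>F x\<close> is the second highest of the bids
  \<open>\<Sum>j. w i j * x j\<close>. This \<open>F\<close> is positively homogeneous, and linear on each cone of
  vectors \<open>x\<close> on which a fixed bidder \<open>a\<close> bids highest and a fixed \<open>k\<close> second.

  Existence: merging all signals that fall into the same cone does not change the revenue, so it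
  suffices to optimise over schemes with one signal per cone. These form a compact set on which
  the revenue is continuous, so a maximum exists.

  Few signals: if a scheme has more than \<open>m\<close> signals, the vectors \<open>\<phi>(\<cdot>, s)\<close> are
  linearly dependent. Rescaling the signals along the dependence preserves the priors and, by
  homogeneity, changes the revenue linearly; moving in the non-decreasing direction until one
  signal vanishes removes it. Hence some optimal scheme has at most \<open>m\<close> signals, which is
  within the claimed bound.\<close>

lemma max2_eq_sort_nth:
  assumes "2 \<le> length xs"
  shows "max2 xs = sort xs ! (length xs - 2)"
  using assms unfolding max2_def by (simp add: rev_nth numeral_2_eq_2)

lemma max2_eqI:
  fixes xs :: "real list"
  assumes ge: "2 \<le> length (filter (\<lambda>x. t \<le> x) xs)"
    and gt: "length (filter (\<lambda>x. t < x) xs) \<le> 1"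
  shows "max2 xs = t"
proof -
  define zs where "zs = sort xs"
  define L where "L = length xs"
  have L: "length zs = L" "2 \<le> L"
    using le_trans[OF ge length_filter_le] by (auto simp: zs_def L_def)
  have sorted: "zs ! i \<le> zs ! j" if "i \<le> j" "j < L" for i j
    using that L by (intro sorted_nth_mono) (auto simp: zs_def)
  have count: "length (filter P zs) = length (filter P xs)" for P
    unfolding zs_def by (metis mset_sort mset_filter size_mset)
  have filter_card: "length (filter P zs) = card {i. i < L \<and> P (zs ! i)}" for P
    by (simp add: length_filter_conv_card L)
  have "\<not> zs ! (L - 2) < t"
  proof
    assume "zs ! (L - 2) < t"
    have "{i. i < L \<and> t \<le> zs ! i} \<subseteq> {L - 1}"
    proof
      fix i assume "i \<in> {i. i < L \<and> t \<le> zs ! i}"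
      then show "i \<in> {L - 1}"
        using sorted[of i "L - 2"] \<open>zs ! (L - 2) < t\<close> L by (cases "i \<le> L - 2") auto
    qed
    then have "card {i. i < L \<and> t \<le> zs ! i} \<le> 1"
      using card_mono[of "{L - 1}"] by fastforce
    then show False using ge count filter_card by simp
  qed
  moreover have "\<not> t < zs ! (L - 2)"
  proof
    assume "t < zs ! (L - 2)"
    moreover have "zs ! (L - 2) \<le> zs ! (L - 1)"
      using sorted L by simp
    ultimately have "{L - 2, L - 1} \<subseteq> {i. i < L \<and> t < zs ! i}"
      using L by auto
    then have "2 \<le> card {i. i < L \<and> t < zs ! i}"
      using card_mono[of "{i. i < L \<and> t < zs ! i}" "{L - 2, L - 1}"] L by auto
    then show False using gt count filter_card by simp
  qed
  ultimately show ?thesis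
    using max2_eq_sort_nth[of xs] L by (simp add: zs_def L_def)
qed

lemma length_filter_map_upt:
  "length (filter P (map f [0..<n])) = card {i. i < n \<and> P (f i)}"
  unfolding length_filter_conv_card by (rule arg_cong[where f = card]) auto

lemma finite_has_maximizer:
  fixes f :: "'a \<Rightarrow> 'b::linorder"
  assumes "finite A" "A \<noteq> {}"
  shows "\<exists>a\<in>A. \<forall>b\<in>A. f b \<le> f a"
proof -
  have "Max (f ` A) \<in> f ` A"
    using assms by simp
  then obtain a where a: "a \<in> A" "f a = Max (f ` A)"
    by auto
  have "f b \<le> f a" if "b \<in> A" for b
    using Max_ge[of "f ` A" "f b"] assms(1) that a(2) by simp
  with a(1) show ?thesis by blast
qed

lemma exists_linear_dependence:
  fixes q :: "nat \<Rightarrow> nat \<Rightarrow> real"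
  assumes "finite S" "m < card S"
  shows "\<exists>\<mu>. (\<exists>s\<in>S. \<mu> s \<noteq> 0) \<and> (\<forall>j<m. (\<Sum>s\<in>S. \<mu> s * q j s) = 0)"
  using assms
proof (induction m arbitrary: S q)
  case 0
  then obtain s where "s \<in> S" by fastforce
  then show ?case by (intro exI[of _ "\<lambda>_. 1"]) auto
next
  case (Suc m)
  show ?case
  proof (cases "\<forall>s\<in>S. q m s = 0")
    case True
    obtain \<mu> where \<mu>: "\<exists>s\<in>S. \<mu> s \<noteq> 0" "\<forall>j<m. (\<Sum>s\<in>S. \<mu> s * q j s) = 0"
      using Suc.IH[OF Suc.prems(1) Suc_lessD[OF Suc.prems(2)]] by blast
    have "\<forall>j<Suc m. (\<Sum>s\<in>S. \<mu> s * q j s) = 0"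
      using \<mu>(2) True by (simp add: less_Suc_eq)
    with \<mu>(1) show ?thesis by blast
  next
    case False
    then obtain s0 where s0: "s0 \<in> S" "q m s0 \<noteq> 0" by auto
    \<comment> \<open>Gaussian elimination: clear row \<open>m\<close> with column \<open>s0\<close>, recurse on the other columns.\<close>
    define r where "r j s = q j s - q m s / q m s0 * q j s0" for j s
    obtain \<mu>' where \<mu>': "\<exists>s\<in>S - {s0}. \<mu>' s \<noteq> 0" "\<forall>j<m. (\<Sum>s\<in>S - {s0}. \<mu>' s * r j s) = 0"
      using Suc.IH[of "S - {s0}" r] Suc.prems s0 by (auto simp: less_diff_conv)
    define \<mu> where "\<mu> = \<mu>'(s0 := - (\<Sum>s\<in>S - {s0}. \<mu>' s * q m s) / q m s0)"
    have eliminated: "(\<Sum>s\<in>S. \<mu> s * q j s) = (\<Sum>s\<in>S - {s0}. \<mu>' s * r j s)" for j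
    proof -
      have "(\<Sum>s\<in>S. \<mu> s * q j s) = \<mu> s0 * q j s0 + (\<Sum>s\<in>S - {s0}. \<mu>' s * q j s)"
        using s0 Suc.prems(1) by (simp add: sum.remove \<mu>_def)
      moreover have "(\<Sum>s\<in>S - {s0}. \<mu>' s * r j s)
          = (\<Sum>s\<in>S - {s0}. \<mu>' s * q j s) - (\<Sum>s\<in>S - {s0}. \<mu>' s * q m s) * (q j s0 / q m s0)"
        unfolding r_def right_diff_distrib sum_subtractf sum_distrib_right
        by (simp add: algebra_simps)
      ultimately show ?thesis by (simp add: \<mu>_def algebra_simps)
    qed
    have "r m s = 0" for s
      using s0 by (simp add: r_def)
    then have "\<forall>j<Suc m. (\<Sum>s\<in>S. \<mu> s * q j s) = 0"
      using \<mu>'(2) by (simp add: eliminated less_Suc_eq)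
    moreover have "\<exists>s\<in>S. \<mu> s \<noteq> 0"
      using \<mu>'(1) by (auto simp: \<mu>_def)
    ultimately show ?thesis by blast
  qed
qed

lemma is_mixed_schemeI:
  assumes "finite S" "\<And>j s. j < m \<Longrightarrow> s \<in> S \<Longrightarrow> 0 \<le> \<phi> j s"
    and "\<And>j. j < m \<Longrightarrow> (\<Sum>s\<in>S. \<phi> j s) = 1"
  shows "is_mixed_scheme m S \<phi>"
proof -
  have "\<phi> j s \<le> (\<Sum>s\<in>S. \<phi> j s)" if "j < m" "s \<in> S" for j s
    using assms that by (intro member_le_sum) auto
  with assms show ?thesis
    unfolding is_mixed_scheme_def by auto
qed

definition scheme_value ::
    "((nat \<Rightarrow> real) \<Rightarrow> real) \<Rightarrow> nat set \<Rightarrow> (nat \<Rightarrow> nat \<Rightarrow> real) \<Rightarrow> real" where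
  "scheme_value F S \<phi> = (\<Sum>s\<in>S. F (\<lambda>j. \<phi> j s))"

locale homogeneous_objective =
  fixes m :: nat and F :: "(nat \<Rightarrow> real) \<Rightarrow> real"
  assumes F_cong: "(\<And>j. j < m \<Longrightarrow> x j = y j) \<Longrightarrow> F x = F y"
    and F_scale: "0 \<le> t \<Longrightarrow> F (\<lambda>j. t * x j) = t * F x"
begin

lemma F_null: "(\<And>j. j < m \<Longrightarrow> x j = 0) \<Longrightarrow> F x = 0"
  using F_cong[of x "\<lambda>j. 0 * x j"] F_scale[of 0 x] by simp

lemma remove_null_signal:
  assumes "is_mixed_scheme m S \<phi>" "s0 \<in> S" "\<And>j. j < m \<Longrightarrow> \<phi> j s0 = 0"
  shows "is_mixed_scheme m (S - {s0}) \<phi>" "scheme_value F (S - {s0}) \<phi> = scheme_value F S \<phi>"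
proof -
  have split: "(\<Sum>s\<in>S. g s) = g s0 + (\<Sum>s\<in>S - {s0}. g s)" for g :: "nat \<Rightarrow> real"
    using assms(1,2) by (simp add: is_mixed_scheme_def sum.remove)
  show "is_mixed_scheme m (S - {s0}) \<phi>"
    using assms split[of "\<phi> _"] by (intro is_mixed_schemeI) (auto simp: is_mixed_scheme_def)
  show "scheme_value F (S - {s0}) \<phi> = scheme_value F S \<phi>"
    using split F_null[of "\<lambda>j. \<phi> j s0"] assms(3) by (simp add: scheme_value_def)
qed

text \<open>The weights \<open>1 - \<mu> s / \<mu> s1\<close> are nonnegative by the minimality of \<open>\<mu> s1\<close> and
  vanish at \<open>s1\<close>; since \<open>\<mu>\<close> is a dependence, the column sums stay \<open>1\<close>.\<close>
lemma shift_along_dependence: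
  assumes scheme: "is_mixed_scheme m S \<phi>"
    and dep: "\<And>j. j < m \<Longrightarrow> (\<Sum>s\<in>S. \<mu> s * \<phi> j s) = 0"
    and s1: "s1 \<in> S" "\<mu> s1 < 0" "\<And>s. s \<in> S \<Longrightarrow> \<mu> s1 \<le> \<mu> s"
  defines "\<phi>' \<equiv> \<lambda>j s. (1 - \<mu> s / \<mu> s1) * \<phi> j s"
  shows "is_mixed_scheme m (S - {s1}) \<phi>'"
    and "scheme_value F (S - {s1}) \<phi>' =
           scheme_value F S \<phi> - (\<Sum>s\<in>S. \<mu> s * F (\<lambda>j. \<phi> j s)) / \<mu> s1"
proof -
  define l where "l s = 1 - \<mu> s / \<mu> s1" for s
  have fin: "finite S" and nonneg: "\<And>j s. j < m \<Longrightarrow> s \<in> S \<Longrightarrow> 0 \<le> \<phi> j s"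
    and prior: "\<And>j. j < m \<Longrightarrow> (\<Sum>s\<in>S. \<phi> j s) = 1"
    using scheme by (auto simp: is_mixed_scheme_def)
  have l_nonneg: "0 \<le> l s" if "s \<in> S" for s
    using s1(2) s1(3)[OF that] by (simp add: l_def divide_le_eq_1)
  have split: "(\<Sum>s\<in>S. g s) = g s1 + (\<Sum>s\<in>S - {s1}. g s)" for g :: "nat \<Rightarrow> real"
    using fin s1(1) by (simp add: sum.remove)
  have dropped: "(\<Sum>s\<in>S - {s1}. l s * g s) = (\<Sum>s\<in>S. g s) - (\<Sum>s\<in>S. \<mu> s * g s) / \<mu> s1"
    for g :: "nat \<Rightarrow> real"
    using split[of "\<lambda>s. l s * g s"] s1(2)
    by (simp add: l_def algebra_simps sum_subtractf sum_divide_distrib)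
  show "is_mixed_scheme m (S - {s1}) \<phi>'"
    using fin nonneg l_nonneg dropped[of "\<phi> _"] prior dep
    by (intro is_mixed_schemeI) (auto simp: \<phi>'_def l_def[symmetric])
  have "scheme_value F (S - {s1}) \<phi>' = (\<Sum>s\<in>S - {s1}. l s * F (\<lambda>j. \<phi> j s))"
    unfolding scheme_value_def \<phi>'_def l_def[symmetric] using l_nonneg
    by (intro sum.cong) (auto simp: F_scale)
  then show "scheme_value F (S - {s1}) \<phi>' =
      scheme_value F S \<phi> - (\<Sum>s\<in>S. \<mu> s * F (\<lambda>j. \<phi> j s)) / \<mu> s1"
    by (simp add: dropped scheme_value_def)
qed

lemma eliminate_signal:
  assumes scheme: "is_mixed_scheme m S \<phi>" and many: "m < card S"
    and active: "\<And>s. s \<in> S \<Longrightarrow> \<exists>j<m. \<phi> j s \<noteq> 0"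
  shows "\<exists>s1\<in>S. \<exists>\<phi>'. is_mixed_scheme m (S - {s1}) \<phi>' \<and>
           scheme_value F S \<phi> \<le> scheme_value F (S - {s1}) \<phi>'"
proof -
  have fin: "finite S" and nonneg: "\<And>j s. j < m \<Longrightarrow> s \<in> S \<Longrightarrow> 0 \<le> \<phi> j s"
    using scheme by (auto simp: is_mixed_scheme_def)
  obtain \<mu>0 where \<mu>0: "\<exists>s\<in>S. \<mu>0 s \<noteq> 0" "\<forall>j<m. (\<Sum>s\<in>S. \<mu>0 s * \<phi> j s) = 0"
    using exists_linear_dependence[OF fin many] by blast
  define gain where "gain \<mu> = (\<Sum>s\<in>S. \<mu> s * F (\<lambda>j. \<phi> j s))" for \<mu>
  obtain \<mu> where \<mu>: "\<exists>s\<in>S. \<mu> s \<noteq> 0" "\<And>j. j < m \<Longrightarrow> (\<Sum>s\<in>S. \<mu> s * \<phi> j s) = 0"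
    "0 \<le> gain \<mu>"
  proof (cases "0 \<le> gain \<mu>0")
    case True
    with \<mu>0 that show thesis by blast
  next
    case False
    then have "0 \<le> gain (\<lambda>s. - \<mu>0 s)"
      by (simp add: gain_def sum_negf)
    with \<mu>0 that[of "\<lambda>s. - \<mu>0 s"] show thesis
      by (simp add: sum_negf)
  qed
  have "\<exists>s\<in>S. \<mu> s < 0"
  proof (rule ccontr)
    assume "\<not> (\<exists>s\<in>S. \<mu> s < 0)"
    then have pos: "0 \<le> \<mu> s" if "s \<in> S" for s
      using that by force
    obtain s where s: "s \<in> S" "\<mu> s \<noteq> 0" using \<mu>(1) by blast
    obtain j where j: "j < m" "\<phi> j s \<noteq> 0" using active[OF s(1)] by blast
    have "\<mu> s * \<phi> j s = 0"
      using \<mu>(2)[OF j(1)] sum_nonneg_eq_0_iff[OF fin, of "\<lambda>s. \<mu> s * \<phi> j s"]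
        pos nonneg[OF j(1)] s(1)
      by simp
    with s j show False by simp
  qed
  then obtain s1 where s1: "s1 \<in> S" "\<mu> s1 < 0" "\<And>s. s \<in> S \<Longrightarrow> \<mu> s1 \<le> \<mu> s"
    using finite_has_maximizer[OF fin, of "\<lambda>s. - \<mu> s"] by force
  note shifted = shift_along_dependence[OF scheme \<mu>(2) s1]
  have "scheme_value F S \<phi> \<le> scheme_value F S \<phi> - gain \<mu> / \<mu> s1"
    using \<mu>(3) s1(2) by (simp add: divide_nonneg_neg)
  then have "scheme_value F S \<phi> \<le> scheme_value F (S - {s1}) (\<lambda>j s. (1 - \<mu> s / \<mu> s1) * \<phi> j s)"
    by (simp only: shifted(2) gain_def)
  with shifted(1) s1(1) show ?thesis
    by blast
qed

lemma few_signals_suffice: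
  assumes "is_mixed_scheme m S \<phi>"
  shows "\<exists>S' \<phi>'. is_mixed_scheme m S' \<phi>' \<and> card S' \<le> m \<and>
           scheme_value F S \<phi> \<le> scheme_value F S' \<phi>'"
  using assms
proof (induction "card S" arbitrary: S \<phi> rule: less_induct)
  case less
  have fin: "finite S"
    using less.prems by (simp add: is_mixed_scheme_def)
  consider "card S \<le> m" | "m < card S" "\<And>s. s \<in> S \<Longrightarrow> \<exists>j<m. \<phi> j s \<noteq> 0"
    | s0 where "s0 \<in> S" "\<And>j. j < m \<Longrightarrow> \<phi> j s0 = 0"
    by fastforce
  then show ?case
  proof cases
    case 1
    with less.prems show ?thesis by blast
  next
    case 2
    then obtain s1 \<phi>' where "s1 \<in> S" "is_mixed_scheme m (S - {s1}) \<phi>'"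
      "scheme_value F S \<phi> \<le> scheme_value F (S - {s1}) \<phi>'"
      using eliminate_signal[OF less.prems] by blast
    with less.hyps[of "S - {s1}" \<phi>'] fin show ?thesis
      by (meson card_Diff1_less order_trans)
  next
    case 3
    with remove_null_signal[OF less.prems] less.hyps[of "S - {s0}" \<phi>] fin show ?thesis
      by (metis card_Diff1_less)
  qed
qed

end

definition bid :: "nat \<Rightarrow> (nat \<Rightarrow> nat \<Rightarrow> real) \<Rightarrow> nat \<Rightarrow> (nat \<Rightarrow> real) \<Rightarrow> real" where
  "bid m w i x = (\<Sum>j<m. w i j * x j)"

definition signal_revenue :: "nat \<Rightarrow> nat \<Rightarrow> (nat \<Rightarrow> nat \<Rightarrow> real) \<Rightarrow> (nat \<Rightarrow> real) \<Rightarrow> real" where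
  "signal_revenue n m w x = max2 (map (\<lambda>i. bid m w i x) [0..<n])"

definition bidder_pairs :: "nat \<Rightarrow> (nat \<times> nat) set" where
  "bidder_pairs n = {(a, k). a < n \<and> k < n \<and> a \<noteq> k}"

definition top_two ::
    "nat \<Rightarrow> nat \<Rightarrow> (nat \<Rightarrow> nat \<Rightarrow> real) \<Rightarrow> nat \<times> nat \<Rightarrow> (nat \<Rightarrow> real) \<Rightarrow> bool" where
  "top_two n m w c x \<longleftrightarrow> bid m w (snd c) x \<le> bid m w (fst c) x \<and>
     (\<forall>b<n. b \<noteq> fst c \<longrightarrow> bid m w b x \<le> bid m w (snd c) x)"

lemma finite_bidder_pairs: "finite (bidder_pairs n)"
  by (rule finite_subset[of _ "{..<n} \<times> {..<n}"]) (auto simp: bidder_pairs_def)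

lemma bid_cong: "(\<And>j. j < m \<Longrightarrow> x j = y j) \<Longrightarrow> bid m w i x = bid m w i y"
  unfolding bid_def by (intro sum.cong) auto

lemma bid_scale: "bid m w i (\<lambda>j. t * x j) = t * bid m w i x"
  unfolding bid_def by (simp add: sum_distrib_left algebra_simps)

lemma bid_sum: "bid m w i (\<lambda>j. \<Sum>s\<in>T. x s j) = (\<Sum>s\<in>T. bid m w i (x s))"
  unfolding bid_def by (simp add: sum_distrib_left sum.swap[of _ T])

lemma top_two_cong:
  "(\<And>j. j < m \<Longrightarrow> x j = y j) \<Longrightarrow> top_two n m w c x \<longleftrightarrow> top_two n m w c y"
  unfolding top_two_def using bid_cong[of m x y w] by simp

lemma top_two_scale: "0 \<le> t \<Longrightarrow> top_two n m w c x \<Longrightarrow> top_two n m w c (\<lambda>j. t * x j)"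
  unfolding top_two_def bid_scale by (auto intro: mult_left_mono)

lemma top_two_sum:
  "(\<And>s. s \<in> T \<Longrightarrow> top_two n m w c (x s)) \<Longrightarrow> top_two n m w c (\<lambda>j. \<Sum>s\<in>T. x s j)"
  unfolding top_two_def bid_sum by (auto intro: sum_mono)

lemma top_two_exists:
  assumes "2 \<le> n"
  obtains c where "c \<in> bidder_pairs n" "top_two n m w c x"
proof -
  let ?b = "\<lambda>i. bid m w i x"
  obtain a where a: "a < n" "\<And>i. i < n \<Longrightarrow> ?b i \<le> ?b a"
    using finite_has_maximizer[of "{..<n}" ?b] assms by (auto simp: lessThan_empty_iff)
  have "(if a = 0 then 1 else 0) \<in> {..<n} - {a}"
    using assms a(1) by auto
  then obtain k where k: "k < n" "k \<noteq> a" "\<And>i. i < n \<Longrightarrow> i \<noteq> a \<Longrightarrow> ?b i \<le> ?b k"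
    using finite_has_maximizer[of "{..<n} - {a}" ?b] by auto
  show thesis
    using a k by (intro that[of "(a, k)"]) (auto simp: bidder_pairs_def top_two_def)
qed

lemma signal_revenue_top_two:
  assumes "2 \<le> n" "c \<in> bidder_pairs n" "top_two n m w c x"
  shows "signal_revenue n m w x = bid m w (snd c) x"
proof -
  obtain a k where c: "c = (a, k)" "a < n" "k < n" "a \<noteq> k"
    using assms(2) by (auto simp: bidder_pairs_def)
  let ?b = "\<lambda>i. bid m w i x"
  have "{a, k} \<subseteq> {i. i < n \<and> ?b k \<le> ?b i}"
    using assms(3) c by (auto simp: top_two_def)
  then have at_least_two: "2 \<le> card {i. i < n \<and> ?b k \<le> ?b i}"
    using card_mono[of "{i. i < n \<and> ?b k \<le> ?b i}" "{a, k}"] c by auto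
  have "{i. i < n \<and> ?b k < ?b i} \<subseteq> {a}"
    using assms(3) c by (force simp: top_two_def)
  then have "card {i. i < n \<and> ?b k < ?b i} \<le> card {a}"
    by (intro card_mono) auto
  then have at_most_one: "card {i. i < n \<and> ?b k < ?b i} \<le> 1"
    by simp
  show ?thesis
    unfolding signal_revenue_def c snd_conv
    by (intro max2_eqI) (simp_all only: length_filter_map_upt at_least_two at_most_one)
qed

lemma homogeneous_objective_signal_revenue:
  assumes "2 \<le> n"
  shows "homogeneous_objective m (signal_revenue n m w)"
proof
  show "signal_revenue n m w x = signal_revenue n m w y" if "\<And>j. j < m \<Longrightarrow> x j = y j" for x y
    unfolding signal_revenue_def using bid_cong[OF that] by simp
  show "signal_revenue n m w (\<lambda>j. t * x j) = t * signal_revenue n m w x" if "0 \<le> t" for t x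
  proof -
    obtain c where c: "c \<in> bidder_pairs n" "top_two n m w c x"
      using top_two_exists[OF assms] by blast
    show ?thesis
      using signal_revenue_top_two[OF assms c(1)] c(2) top_two_scale[OF that c(2)]
      by (simp add: bid_scale)
  qed
qed

lemma closedin_Collect_conj:
  assumes "closedin X {x \<in> topspace X. P x}" "closedin X {x \<in> topspace X. Q x}"
  shows "closedin X {x \<in> topspace X. P x \<and> Q x}"
proof -
  have "{x \<in> topspace X. P x \<and> Q x} = {x \<in> topspace X. P x} \<inter> {x \<in> topspace X. Q x}"
    by blast
  with assms show ?thesis by (simp add: closedin_Int)
qed

lemma closedin_Collect_ball:
  assumes "\<And>c. c \<in> C \<Longrightarrow> closedin X {x \<in> topspace X. P c x}"
  shows "closedin X {x \<in> topspace X. \<forall>c\<in>C. P c x}"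
proof (cases "C = {}")
  case False
  then have "{x \<in> topspace X. \<forall>c\<in>C. P c x} = (\<Inter>c\<in>C. {x \<in> topspace X. P c x})"
    by auto
  with False assms show ?thesis by auto
qed simp

lemma closedin_Collect_le:
  assumes "continuous_map X euclideanreal f" "continuous_map X euclideanreal g"
  shows "closedin X {x \<in> topspace X. f x \<le> g x}"
  using closedin_continuous_map_preimage[OF continuous_map_diff[OF assms(2,1)], of "{0..}"]
  by simp

text \<open>A pooled profile has one signal per pair \<open>(a, k)\<close>, on which bidder \<open>a\<close> bids highest
  and \<open>k\<close> second; pooling all signals of a scheme by such pairs preserves its revenue, which is
  linear on pooled profiles.\<close>
definition pooled_profiles ::
    "nat \<Rightarrow> nat \<Rightarrow> (nat \<Rightarrow> nat \<Rightarrow> real) \<Rightarrow> ((nat \<times> nat) \<times> nat \<Rightarrow> real) set" where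
  "pooled_profiles n m w =
     {Q \<in> (\<Pi>\<^sub>E i\<in>bidder_pairs n \<times> {..<m}. {0..1}).
        (\<forall>c\<in>bidder_pairs n. top_two n m w c (\<lambda>j. Q (c, j))) \<and>
        (\<forall>j<m. (\<Sum>c\<in>bidder_pairs n. Q (c, j)) = 1)}"

definition pooled_revenue ::
    "nat \<Rightarrow> nat \<Rightarrow> (nat \<Rightarrow> nat \<Rightarrow> real) \<Rightarrow> ((nat \<times> nat) \<times> nat \<Rightarrow> real) \<Rightarrow> real" where
  "pooled_revenue n m w Q = (\<Sum>c\<in>bidder_pairs n. bid m w (snd c) (\<lambda>j. Q (c, j)))"

definition profile_topology :: "nat \<Rightarrow> nat \<Rightarrow> ((nat \<times> nat) \<times> nat \<Rightarrow> real) topology" where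
  "profile_topology n m = product_topology (\<lambda>_. euclideanreal) (bidder_pairs n \<times> {..<m})"

lemma continuous_map_profile_entry:
  "i \<in> bidder_pairs n \<times> {..<m} \<Longrightarrow>
    continuous_map (profile_topology n m) euclideanreal (\<lambda>Q. Q i)"
  unfolding profile_topology_def
  by (intro continuous_map_product_projection[where X="\<lambda>_. euclideanreal", simplified])

lemma continuous_map_profile_bid:
  "c \<in> bidder_pairs n \<Longrightarrow>
    continuous_map (profile_topology n m) euclideanreal (\<lambda>Q. bid m w i (\<lambda>j. Q (c, j)))"
  unfolding bid_def
  by (intro continuous_map_sum continuous_map_real_mult continuous_map_profile_entry) auto

lemma continuous_map_pooled_revenue:
  "continuous_map (profile_topology n m) euclideanreal (pooled_revenue n m w)"
  unfolding pooled_revenue_def[abs_def]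
  by (intro continuous_map_sum continuous_map_profile_bid) (auto simp: finite_bidder_pairs)

lemma closedin_top_two:
  assumes "c \<in> bidder_pairs n"
  shows "closedin (profile_topology n m)
           {Q \<in> topspace (profile_topology n m). top_two n m w c (\<lambda>j. Q (c, j))}"
proof -
  let ?bid = "\<lambda>i Q. bid m w i (\<lambda>j. Q (c, j))"
  have "{Q \<in> topspace (profile_topology n m). top_two n m w c (\<lambda>j. Q (c, j))} =
      {Q \<in> topspace (profile_topology n m). ?bid (snd c) Q \<le> ?bid (fst c) Q \<and>
         (\<forall>b\<in>{b. b < n \<and> b \<noteq> fst c}. ?bid b Q \<le> ?bid (snd c) Q)}"
    by (auto simp: top_two_def)
  also have "closedin (profile_topology n m) \<dots>"
    using assms by (intro closedin_Collect_conj closedin_Collect_ball closedin_Collect_le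
        continuous_map_profile_bid)
  finally show ?thesis .
qed

lemma compactin_pooled_profiles:
  "compactin (profile_topology n m) (pooled_profiles n m w)"
proof (rule closed_compactin)
  let ?I = "bidder_pairs n \<times> {..<m}"
  let ?X = "profile_topology n m"
  show "compactin ?X (\<Pi>\<^sub>E i\<in>?I. {0..1})"
    unfolding profile_topology_def by (simp add: compactin_PiE)
  show "pooled_profiles n m w \<subseteq> (\<Pi>\<^sub>E i\<in>?I. {0..1})"
    unfolding pooled_profiles_def by blast
  have box: "(\<Pi>\<^sub>E i\<in>?I. {0..1}) = {Q \<in> topspace ?X. \<forall>i\<in>?I. 0 \<le> Q i \<and> Q i \<le> 1}"
    by (auto simp: profile_topology_def PiE_iff extensional_def)
  have "pooled_profiles n m w = {Q \<in> topspace ?X. (\<forall>i\<in>?I. 0 \<le> Q i \<and> Q i \<le> 1) \<and>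
      (\<forall>c\<in>bidder_pairs n. top_two n m w c (\<lambda>j. Q (c, j))) \<and>
      (\<forall>j\<in>{..<m}. (\<Sum>c\<in>bidder_pairs n. Q (c, j)) \<le> 1 \<and>
         1 \<le> (\<Sum>c\<in>bidder_pairs n. Q (c, j)))}"
    unfolding pooled_profiles_def box by (auto intro: order_antisym)
  also have "closedin ?X \<dots>"
    by (intro closedin_Collect_conj closedin_Collect_ball closedin_Collect_le closedin_top_two
        continuous_map_profile_entry continuous_map_sum)
      (auto simp: finite_bidder_pairs)
  finally show "closedin ?X (pooled_profiles n m w)" .
qed

lemma pooled_profile_of_scheme:
  assumes n: "2 \<le> n" and scheme: "is_mixed_scheme m S \<phi>"
  shows "\<exists>Q\<in>pooled_profiles n m w.
           pooled_revenue n m w Q = scheme_value (signal_revenue n m w) S \<phi>"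
proof -
  let ?C = "bidder_pairs n"
  have fin: "finite S" and nonneg: "\<And>j s. j < m \<Longrightarrow> s \<in> S \<Longrightarrow> 0 \<le> \<phi> j s"
    and prior: "\<And>j. j < m \<Longrightarrow> (\<Sum>s\<in>S. \<phi> j s) = 1"
    using scheme by (auto simp: is_mixed_scheme_def)
  have "\<forall>s. \<exists>c. c \<in> ?C \<and> top_two n m w c (\<lambda>j. \<phi> j s)"
    using top_two_exists[OF n] by blast
  then obtain pair where pair: "\<And>s. pair s \<in> ?C" "\<And>s. top_two n m w (pair s) (\<lambda>j. \<phi> j s)"
    by (metis choice)
  define Q where "Q = restrict (\<lambda>(c, j). \<Sum>s\<in>{s\<in>S. pair s = c}. \<phi> j s) (?C \<times> {..<m})"
  have Q: "Q (c, j) = (\<Sum>s\<in>{s\<in>S. pair s = c}. \<phi> j s)" if "c \<in> ?C" "j < m" for c j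
    using that by (simp add: Q_def)
  have pool: "(\<Sum>c\<in>?C. \<Sum>s\<in>{s\<in>S. pair s = c}. f s) = (\<Sum>s\<in>S. f s)" for f :: "nat \<Rightarrow> real"
    using sum.group[OF fin finite_bidder_pairs, where g=pair and h=f] pair(1) by auto
  have "Q \<in> (\<Pi>\<^sub>E i\<in>?C \<times> {..<m}. {0..1})"
  proof -
    have "(\<Sum>s\<in>{s\<in>S. pair s = c}. \<phi> j s) \<le> (\<Sum>s\<in>S. \<phi> j s)" if "j < m" for c j
      using nonneg[OF that] fin by (intro sum_mono2) auto
    then show ?thesis
      using prior nonneg by (auto simp: Q_def PiE_iff intro: sum_nonneg order_trans)
  qed
  moreover have "top_two n m w c (\<lambda>j. Q (c, j))" if "c \<in> ?C" for c
  proof -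
    have "top_two n m w c (\<lambda>j. \<Sum>s\<in>{s\<in>S. pair s = c}. \<phi> j s)"
      using pair(2) by (intro top_two_sum) auto
    then show ?thesis
      using that by (simp add: Q top_two_cong[of m "\<lambda>j. Q (c, j)"])
  qed
  moreover have "(\<Sum>c\<in>?C. Q (c, j)) = 1" if "j < m" for j
    using that pool[of "\<phi> j"] prior by (simp add: Q)
  ultimately have "Q \<in> pooled_profiles n m w"
    by (simp add: pooled_profiles_def)
  moreover have "pooled_revenue n m w Q = scheme_value (signal_revenue n m w) S \<phi>"
  proof -
    have "pooled_revenue n m w Q =
        (\<Sum>c\<in>?C. \<Sum>s\<in>{s\<in>S. pair s = c}. bid m w (snd c) (\<lambda>j. \<phi> j s))"
      unfolding pooled_revenue_def bid_sum[symmetric]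
      by (intro sum.cong refl bid_cong) (simp add: Q)
    also have "\<dots> = (\<Sum>c\<in>?C. \<Sum>s\<in>{s\<in>S. pair s = c}. bid m w (snd (pair s)) (\<lambda>j. \<phi> j s))"
      by (intro sum.cong) auto
    also have "\<dots> = (\<Sum>s\<in>S. bid m w (snd (pair s)) (\<lambda>j. \<phi> j s))"
      by (rule pool)
    also have "\<dots> = scheme_value (signal_revenue n m w) S \<phi>"
      unfolding scheme_value_def using signal_revenue_top_two[OF n pair(1) pair(2)] by simp
    finally show ?thesis .
  qed
  ultimately show ?thesis by blast
qed

lemma scheme_of_pooled_profile:
  assumes n: "2 \<le> n" and Q: "Q \<in> pooled_profiles n m w"
  defines "\<phi> \<equiv> \<lambda>j s. Q (prod_decode s, j)"
  shows "is_mixed_scheme m (prod_encode ` bidder_pairs n) \<phi>"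
    and "scheme_value (signal_revenue n m w) (prod_encode ` bidder_pairs n) \<phi> =
           pooled_revenue n m w Q"
proof -
  let ?C = "bidder_pairs n"
  have reindex: "(\<Sum>s\<in>prod_encode ` ?C. f s) = (\<Sum>c\<in>?C. f (prod_encode c))"
    for f :: "nat \<Rightarrow> real"
    by (simp add: sum.reindex inj_prod_encode)
  have nonneg: "0 \<le> Q (c, j)" if "c \<in> ?C" "j < m" for c j
    using Q that by (auto simp: pooled_profiles_def PiE_iff)
  show "is_mixed_scheme m (prod_encode ` ?C) \<phi>"
    using Q nonneg
    by (intro is_mixed_schemeI) (auto simp: finite_bidder_pairs reindex \<phi>_def pooled_profiles_def)
  have "signal_revenue n m w (\<lambda>j. Q (c, j)) = bid m w (snd c) (\<lambda>j. Q (c, j))" if "c \<in> ?C" for c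
    using signal_revenue_top_two[OF n that] Q that by (simp add: pooled_profiles_def)
  then show "scheme_value (signal_revenue n m w) (prod_encode ` ?C) \<phi> = pooled_revenue n m w Q"
    by (simp add: scheme_value_def reindex \<phi>_def pooled_revenue_def)
qed

theorem exists_optimal_scheme:
  assumes n: "2 \<le> n"
  shows "\<exists>S \<phi>. is_mixed_scheme m S \<phi> \<and> (\<forall>S' \<phi>'. is_mixed_scheme m S' \<phi>' \<longrightarrow>
           scheme_value (signal_revenue n m w) S' \<phi>' \<le> scheme_value (signal_revenue n m w) S \<phi>)"
proof -
  have "is_mixed_scheme m {0} (\<lambda>_ _. 1)"
    by (simp add: is_mixed_scheme_def)
  then have "pooled_profiles n m w \<noteq> {}"
    using pooled_profile_of_scheme[OF n] by blast
  moreover have "compact (pooled_revenue n m w ` pooled_profiles n m w)"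
    using image_compactin[OF compactin_pooled_profiles continuous_map_pooled_revenue] by simp
  ultimately obtain Q where Q: "Q \<in> pooled_profiles n m w"
    "\<And>Q'. Q' \<in> pooled_profiles n m w \<Longrightarrow> pooled_revenue n m w Q' \<le> pooled_revenue n m w Q"
    using compact_attains_sup[of "pooled_revenue n m w ` pooled_profiles n m w"] by blast
  show ?thesis
    using scheme_of_pooled_profile[OF n Q(1)] pooled_profile_of_scheme[OF n] Q(2) by metis
qed

theorem mainTheorem2:
  fixes n m :: nat and p :: "nat \<Rightarrow> real" and v :: "nat \<Rightarrow> nat \<Rightarrow> real"
  assumes "n \<ge> 2"
    and "\<forall>j<m. 0 \<le> p j"
    and "(\<Sum>j<m. p j) = 1"
    and "\<forall>i<n. \<forall>j<m. 0 \<le> v i j"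
  shows "\<exists>S \<phi>. is_mixed_scheme m S \<phi> \<and>
           card S \<le> m + min (n choose 2) (m choose 2) \<and>
           (\<forall>S' \<phi>'. is_mixed_scheme m S' \<phi>' \<longrightarrow>
                revenue n m p v S' \<phi>' \<le> revenue n m p v S \<phi>)"
proof -
  define w where "w i j = p j * v i j" for i j
  have revenue: "revenue n m p v = scheme_value (signal_revenue n m w)"
    by (simp add: fun_eq_iff revenue_def scheme_value_def signal_revenue_def bid_def w_def)
  interpret homogeneous_objective m "signal_revenue n m w"
    using homogeneous_objective_signal_revenue[OF assms(1)] .
  obtain S \<phi> where opt: "is_mixed_scheme m S \<phi>"
    "\<And>S' \<phi>'. is_mixed_scheme m S' \<phi>' \<Longrightarrow>
       scheme_value (signal_revenue n m w) S' \<phi>' \<le> scheme_value (signal_revenue n m w) S \<phi>"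
    using exists_optimal_scheme[OF assms(1)] by blast
  obtain S' \<phi>' where few: "is_mixed_scheme m S' \<phi>'" "card S' \<le> m"
    "scheme_value (signal_revenue n m w) S \<phi> \<le> scheme_value (signal_revenue n m w) S' \<phi>'"
    using few_signals_suffice[OF opt(1)] by blast
  show ?thesis
    unfolding revenue using few opt(2) by (meson order_trans trans_le_add1)
qed

end
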